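(* For all integers $m,n\ge 0$ and all real $t$, $$H_{m,n}(t)=m!\,n!\left(\frac{1}{\sqrt2}\right)^{m+n}\sum_{k=0}^{m}\sum_{j=0}^{n}\frac{H_{k,j}(t/\sqrt2)}{k!\,j!}\,\frac{H_{m-k,n-j}(t/\sqrt2)}{(m-k)!\,(n-j)!}.$$
   Context: For integers $m,n\ge 0$, the two-index Hermite polynomial is $H_{m,n}(x)=\left(-\frac{d}{dx}+2x\right)^m(x^n)$, i.e. the operator $f\mapsto -f'+2xf$ applied $m$ times to $x^n$. *)

theory Defs
  imports "HOL-Analysis.Analysis" "HOL-Computational_Algebra.Polynomial"
begin

definition herm_op :: "real poly \<Rightarrow> real poly" where
  "herm_op p = - pderiv p + [:0, 2:] * p"

definition H2 :: "nat \<Rightarrow> nat \<Rightarrow> real poly" where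
  "H2 m n = (herm_op ^^ m) (monom 1 n)"

definition Hmn :: "nat \<Rightarrow> nat \<Rightarrow> real \<Rightarrow> real" where
  "Hmn m n x = poly (H2 m n) x"

end

theory Submission
  imports Defs
begin

(*
  Write A for the operator f \<mapsto> -f' + 2xf, so that H_{m,n} = A^m(x^n), and let S be the
  rescaling p(x) \<mapsto> p(x/\<surd>2).  The whole proof rests on a Leibniz rule for A on rescaled
  products:  A(S p \<cdot> S q) = (S(A p) \<cdot> S q + S p \<cdot> S(A q)) / \<surd>2,  which holds because the
  factor 2x splits evenly between the two rescaled factors (4 (1/\<surd>2)^2 = 2).

  With the normalised polynomials N_{k,j} = H_{k,j}/(k! j!) we have A N_{k,j} = (k+1) N_{k+1,j},
  and the convolution  C_{m,n} = \<Sum>_{k\<le>m} \<Sum>_{j\<le>n} S N_{k,j} \<cdot> S N_{m-k,n-j}  therefore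
  satisfies A C_{m,n} = (m+1)/\<surd>2 \<cdot> C_{m+1,n}  (a discrete Leibniz/convolution identity).
  For m = 0 the binomial theorem gives n! C_{0,n}(x) = (\<surd>2 x)^n.  Induction on m then yields
  H_{m,n} = m! n! (1/\<surd>2)^{m+n} C_{m,n}, and evaluating at t is the theorem.
*)

lemma herm_op_eq: "herm_op p = smult 2 (pCons 0 p) - pderiv p"
  by (simp add: herm_op_def)

lemma herm_op_add: "herm_op (p + q) = herm_op p + herm_op q"
  by (simp add: herm_op_eq pderiv_add smult_add_right)

lemma herm_op_smult: "herm_op (smult c p) = smult c (herm_op p)"
  by (simp add: herm_op_eq pderiv_smult smult_diff_right mult.commute)

lemma herm_op_sum: "herm_op (sum f A) = (\<Sum>i\<in>A. herm_op (f i))"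
proof (induction A rule: infinite_finite_induct)
  case (insert x F)
  then show ?case
    by (simp add: herm_op_add)
qed (simp_all add: herm_op_def)

lemma H2_Suc: "H2 (Suc m) n = herm_op (H2 m n)"
  by (simp add: H2_def)

definition rescale :: "real poly \<Rightarrow> real poly" where
  "rescale p = pcompose p [:0, 1 / sqrt 2:]"

lemma poly_rescale: "poly (rescale p) x = poly p (x / sqrt 2)"
  by (simp add: rescale_def poly_pcompose)

lemma rescale_smult: "rescale (smult c p) = smult c (rescale p)"
  by (simp add: rescale_def pcompose_smult)

lemma rescale_diff: "rescale (p - q) = rescale p - rescale q"
  by (simp add: rescale_def pcompose_diff)

lemma rescale_pCons_0: "rescale (pCons 0 p) = smult (1 / sqrt 2) (pCons 0 (rescale p))"
  by (simp add: rescale_def pcompose_pCons)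

lemma pderiv_rescale: "pderiv (rescale p) = smult (1 / sqrt 2) (rescale (pderiv p))"
  by (simp add: rescale_def pderiv_pcompose pderiv_pCons)

lemma herm_op_rescale_mult:
  "herm_op (rescale p * rescale q) =
     smult (1 / sqrt 2) (rescale (herm_op p) * rescale q + rescale p * rescale (herm_op q))"
proof -
  have half: "(1 / sqrt 2) * (1 / sqrt 2) = (1::real) / 2"
    by (simp add: field_simps)
  show ?thesis
    unfolding herm_op_eq
    by (simp add: rescale_smult rescale_diff rescale_pCons_0 pderiv_mult pderiv_rescale half
        algebra_simps smult_add_right smult_diff_right flip: smult_add_left)
qed

text \<open>Differentiating a Cauchy convolution term by term: if \<open>f\<close> and \<open>g\<close> behave like
  Taylor coefficients (index shift with a factor), the two contributions recombine into
  \<open>(m+1)\<close> times the next convolution.\<close>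
lemma sum_convolution_shift:
  fixes f g :: "nat \<Rightarrow> 'a::comm_ring_1"
  shows "(\<Sum>k=0..m. of_nat (Suc k) * f (Suc k) * g (m - k)
                     + f k * (of_nat (Suc m - k) * g (Suc m - k)))
       = of_nat (Suc m) * (\<Sum>k=0..Suc m. f k * g (Suc m - k))"
proof -
  have left: "(\<Sum>k=0..m. of_nat (Suc k) * f (Suc k) * g (m - k))
      = (\<Sum>k=0..Suc m. of_nat k * f k * g (Suc m - k))"
  proof -
    have "(\<Sum>k=0..m. of_nat (Suc k) * f (Suc k) * g (m - k))
        = (\<Sum>k=Suc 0..Suc m. of_nat k * f k * g (Suc m - k))"
      by (subst sum.shift_bounds_cl_Suc_ivl) simp
    also have "\<dots> = (\<Sum>k=0..Suc m. of_nat k * f k * g (Suc m - k))"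
      by (subst (2) sum.atLeast_Suc_atMost) simp_all
    finally show ?thesis .
  qed
  have right: "(\<Sum>k=0..m. f k * (of_nat (Suc m - k) * g (Suc m - k)))
      = (\<Sum>k=0..Suc m. of_nat (Suc m - k) * f k * g (Suc m - k))"
    by (simp add: mult_ac)
  have weights: "of_nat k * f k * g (Suc m - k) + of_nat (Suc m - k) * f k * g (Suc m - k)
      = of_nat (Suc m) * (f k * g (Suc m - k))" if "k \<le> Suc m" for k
  proof -
    from that have "of_nat k + of_nat (Suc m - k) = (of_nat (Suc m) :: 'a)"
      by (simp flip: of_nat_add)
    then show ?thesis
      by (metis distrib_right mult.assoc)
  qed
  have "(\<Sum>k=0..m. of_nat (Suc k) * f (Suc k) * g (m - k)
                     + f k * (of_nat (Suc m - k) * g (Suc m - k)))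
      = (\<Sum>k=0..Suc m. of_nat k * f k * g (Suc m - k)
                       + of_nat (Suc m - k) * f k * g (Suc m - k))"
    by (simp only: sum.distrib left right)
  also have "\<dots> = (\<Sum>k=0..Suc m. of_nat (Suc m) * (f k * g (Suc m - k)))"
    by (rule sum.cong[OF refl], rule weights) simp
  finally show ?thesis
    by (simp only: sum_distrib_left)
qed

lemma smult_sum_right: "smult c (sum f A) = (\<Sum>i\<in>A. smult c (f i))"
  by (induction A rule: infinite_finite_induct) (simp_all add: smult_add_right)

lemma smult_of_nat: "smult (of_nat c) p = of_nat c * p"
  by (simp add: of_nat_poly)

definition normH :: "nat \<Rightarrow> nat \<Rightarrow> real poly" where
  "normH k j = smult (1 / (fact k * fact j)) (H2 k j)"

lemma poly_normH: "poly (normH k j) y = Hmn k j y / (fact k * fact j)"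
  by (simp add: normH_def Hmn_def)

lemma herm_op_normH: "herm_op (normH k j) = smult (of_nat (Suc k)) (normH (Suc k) j)"
proof -
  have "(1::real) / (fact k * fact j) = of_nat (Suc k) * (1 / (fact (Suc k) * fact j))"
    by (simp add: fact_Suc field_simps del: of_nat_Suc)
  then show ?thesis
    by (simp add: normH_def herm_op_smult H2_Suc)
qed

definition conv :: "nat \<Rightarrow> nat \<Rightarrow> real poly" where
  "conv m n = (\<Sum>k = 0..m. \<Sum>j = 0..n. rescale (normH k j) * rescale (normH (m - k) (n - j)))"

lemma poly_conv: "poly (conv m n) x = (\<Sum>k = 0..m. \<Sum>j = 0..n.
       (Hmn k j (x / sqrt 2) / (fact k * fact j)) *
       (Hmn (m - k) (n - j) (x / sqrt 2) / (fact (m - k) * fact (n - j))))"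
  by (simp add: conv_def poly_sum poly_rescale poly_normH)

lemma herm_op_conv_term:
  "herm_op (rescale (normH k j) * rescale (normH l i)) = smult (1 / sqrt 2)
     (of_nat (Suc k) * rescale (normH (Suc k) j) * rescale (normH l i)
      + rescale (normH k j) * (of_nat (Suc l) * rescale (normH (Suc l) i)))"
  by (simp only: herm_op_rescale_mult herm_op_normH rescale_smult mult_smult_left
      mult_smult_right) (simp only: smult_of_nat mult.assoc mult.left_commute)

lemma herm_op_conv: "herm_op (conv m n) = smult (1 / sqrt 2) (of_nat (Suc m) * conv (Suc m) n)"
proof -
  have "herm_op (conv m n) = smult (1 / sqrt 2) (\<Sum>j = 0..n. \<Sum>k = 0..m.
     of_nat (Suc k) * rescale (normH (Suc k) j) * rescale (normH (m - k) (n - j))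
     + rescale (normH k j) * (of_nat (Suc m - k) * rescale (normH (Suc m - k) (n - j))))"
    unfolding conv_def herm_op_sum herm_op_conv_term
    by (simp add: smult_sum_right sum.swap[of _ "{0..m}"] Suc_diff_le)
  also have "\<dots> = smult (1 / sqrt 2) (\<Sum>j = 0..n. of_nat (Suc m) *
      (\<Sum>k = 0..Suc m. rescale (normH k j) * rescale (normH (Suc m - k) (n - j))))"
    by (simp only: sum_convolution_shift[of "\<lambda>k. rescale (normH k _)" "\<lambda>k. rescale (normH k _)"])
  also have "\<dots> = smult (1 / sqrt 2) (of_nat (Suc m) * conv (Suc m) n)"
    unfolding conv_def sum_distrib_left by (subst (2) sum.swap) (rule refl)
  finally show ?thesis .
qed

text \<open>Base case: since \<open>H_{0,j} = x^j\<close>, the convolution is a binomial expansion,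
  \<open>n! C_{0,n}(x) = (x/\<surd>2 + x/\<surd>2)^n = (\<surd>2 x)^n\<close>.\<close>
lemma poly_conv_0: "fact n * poly (conv 0 n) x = (sqrt 2 * x) ^ n"
proof -
  define y where "y = x / sqrt 2"
  have H2_0: "Hmn 0 j z = z ^ j" for j z
    by (simp add: Hmn_def H2_def poly_monom)
  have conv_0: "poly (conv 0 n) x = (\<Sum>j = 0..n. y ^ j / fact j * (y ^ (n - j) / fact (n - j)))"
    by (simp add: poly_conv H2_0 y_def)
  have "fact n * poly (conv 0 n) x = (\<Sum>j = 0..n. of_nat (n choose j) * y ^ j * y ^ (n - j))"
    unfolding conv_0 sum_distrib_left by (intro sum.cong refl) (simp add: binomial_fact field_simps)
  also have "\<dots> = (y + y) ^ n"
    by (simp only: binomial_ring atLeast0AtMost)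
  also have "y + y = sqrt 2 * x"
    by (simp add: y_def field_simps flip: mult.assoc)
  finally show ?thesis .
qed

lemma H2_eq_conv: "H2 m n = smult (fact m * fact n * (1 / sqrt 2) ^ (m + n)) (conv m n)"
proof (induction m)
  case 0
  have "poly (H2 0 n) x = (1 / sqrt 2) ^ n * (fact n * poly (conv 0 n) x)" for x
    by (simp add: poly_conv_0 H2_def poly_monom flip: power_mult_distrib)
  then show ?case
    by (intro poly_eq_poly_eq_iff[THEN iffD1] ext) simp
next
  case (Suc m)
  have coeff: "fact m * fact n * (1 / sqrt 2) ^ (m + n) * ((1 / sqrt 2) * of_nat (Suc m))
      = (fact (Suc m) * fact n * (1 / sqrt 2) ^ (Suc m + n) :: real)"
    by (simp add: fact_Suc algebra_simps del: of_nat_Suc)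
  have "H2 (Suc m) n = smult (fact m * fact n * (1 / sqrt 2) ^ (m + n))
      (smult (1 / sqrt 2) (smult (of_nat (Suc m)) (conv (Suc m) n)))"
    by (simp only: H2_Suc Suc.IH herm_op_smult herm_op_conv smult_of_nat)
  also have "\<dots> = smult (fact (Suc m) * fact n * (1 / sqrt 2) ^ (Suc m + n)) (conv (Suc m) n)"
    by (simp only: smult_smult coeff)
  finally show ?case .
qed

theorem mainTheorem10:
  fixes m n :: nat and t :: real
  shows "Hmn m n t = fact m * fact n * (1 / sqrt 2) ^ (m + n) *
    (\<Sum>k = 0..m. \<Sum>j = 0..n.
       (Hmn k j (t / sqrt 2) / (fact k * fact j)) *
       (Hmn (m - k) (n - j) (t / sqrt 2) / (fact (m - k) * fact (n - j))))"
  by (simp only: Hmn_def[of m n] H2_eq_conv poly_smult poly_conv)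

end
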